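(* Let $s\colon M\to TM\setminus 0$ be a smooth section such that the pullback metric $s^*g$, with components $(s^*g)_{\alpha\beta}(x)=g_{\alpha\beta}(x,s(x))$, is non-degenerate (this holds since $g$ is non-degenerate). Let $\nabla^{s^*g}$ be the Levi-Civita connection of $s^*g$ on $M$, with coefficients $(\nabla^{s^*g})^\alpha_{\beta\gamma}$, and let $\overset{s}{\nabla}{}^{\mathrm{ChR}}$ be the linear connection on $M$ with coefficients $\Gamma^\alpha_{\beta\gamma}(x,s(x))$ (the pullback of the Chern–Rund connection). Then in every chart \[ (\nabla^{s^*g})^\alpha_{\beta\gamma}-\Gamma^\alpha_{\beta\gamma}(x,s(x))=C^\alpha_{\mu\gamma}\,D_\beta s^\mu+C^\alpha_{\mu\beta}\,D_\gamma s^\mu-C_{\mu\beta\gamma}\,g^{\alpha\delta}D_\delta s^\mu, \] where all of $C$, $g$, $g^{-1}$ are evaluated at $(x,s(x))$. Equivalently, for all vector fields $X,Y$ on $M$, \[ \nabla^{s^*g}_XY-\overset{s}{\nabla}{}^{\mathrm{ChR}}_XY=C(D_Ys,X)+C(D_Xs,Y)-g\big(C(X,Y),Ds\big)^\sharp, \] where $C(U,V)$ denotes the vector with components $C^\alpha_{\mu\nu}U^\mu V^\nu$, $g(C(X,Y),Ds)^\sharp$ the vector with components $g^{\alpha\delta}C_{\mu\beta\gamma}X^\beta Y^\gamma D_\delta s^\mu$, and $C$, $g$ stand for their pullbacks by $s$.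
   Context: $M$ is a smooth $n$-manifold, $E=TM\setminus 0$, and $\{x^\mu,y^\mu\}$ are the coordinates on $TM$ induced by coordinates $\{x^\mu\}$ on $M$. A pseudo-Finsler Lagrangian is a smooth $\mathscr{L}\colon E\to\mathbb{R}$ with $\mathscr{L}(x,ty)=t^2\mathscr{L}(x,y)$ for all $t>0$, whose Finsler metric $g_{\mu\nu}=\partial^2\mathscr{L}/\partial y^\mu\partial y^\nu$ is non-degenerate (any signature); $g^{\mu\nu}$ is its inverse and indices are raised/lowered with $g$. Cartan torsion: $C_{\alpha\beta\gamma}=\tfrac12\partial g_{\beta\gamma}/\partial y^\alpha$. Spray: $2G^\alpha=g^{\alpha\delta}\big(\frac{\partial^2\mathscr{L}}{\partial x^\gamma\partial y^\delta}y^\gamma-\frac{\partial\mathscr{L}}{\partial x^\delta}\big)$; nonlinear connection $N^\alpha_\mu=\partial G^\alpha/\partial y^\mu$; $\frac{\delta}{\delta x^\mu}=\frac{\partial}{\partial x^\mu}-N^\nu_\mu\frac{\partial}{\partial y^\nu}$. Chern–Rund (= Cartan horizontal) coefficients: $\Gamma^\alpha_{\beta\gamma}=\tfrac12 g^{\alpha\sigma}\big(\frac{\delta g_{\sigma\gamma}}{\delta x^\beta}+\frac{\delta g_{\sigma\beta}}{\delta x^\gamma}-\frac{\delta g_{\beta\gamma}}{\delta x^\sigma}\big)$. For a section $s\colon M\to E$, $D_\alpha s^\mu=\frac{\partial s^\mu}{\partial x^\alpha}+N^\mu_\alpha(x,s(x))$ and $D_\xi s^\mu=\xi^\alpha D_\alpha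 s^\mu$. *)

theory Defs
  imports "HOL-Analysis.Analysis"
begin

coinductive smooth_on :: "'a::euclidean_space set \<Rightarrow> ('a \<Rightarrow> 'b::real_normed_vector) \<Rightarrow> bool"
  for S where
  "f differentiable_on S \<Longrightarrow> (\<forall>v. smooth_on S (\<lambda>x. frechet_derivative f (at x) v))
   \<Longrightarrow> smooth_on S f"

text \<open>Chart coordinates: points of TU are pairs (x,y) of coordinate vectors.\<close>
definition pdx :: "((real^'n) \<times> (real^'n) \<Rightarrow> real) \<Rightarrow> 'n \<Rightarrow> (real^'n) \<times> (real^'n) \<Rightarrow> real" where
  "pdx F i p = frechet_derivative F (at p) (axis i 1, 0)"

definition pdy :: "((real^'n) \<times> (real^'n) \<Rightarrow> real) \<Rightarrow> 'n \<Rightarrow> (real^'n) \<times> (real^'n) \<Rightarrow> real" where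
  "pdy F i p = frechet_derivative F (at p) (0, axis i 1)"

definition pd :: "(real^'n \<Rightarrow> real) \<Rightarrow> 'n \<Rightarrow> real^'n \<Rightarrow> real" where
  "pd f i x = frechet_derivative f (at x) (axis i 1)"

definition fmetric :: "((real^'n) \<times> (real^'n) \<Rightarrow> real) \<Rightarrow> 'n \<Rightarrow> 'n \<Rightarrow> (real^'n) \<times> (real^'n) \<Rightarrow> real" where
  "fmetric L \<mu> \<nu> p = pdy (pdy L \<nu>) \<mu> p"

definition fmat :: "((real^'n) \<times> (real^'n) \<Rightarrow> real) \<Rightarrow> (real^'n) \<times> (real^'n) \<Rightarrow> real^'n^'n" where
  "fmat L p = (\<chi> \<mu> \<nu>. fmetric L \<mu> \<nu> p)"

definition finv :: "((real^'n) \<times> (real^'n) \<Rightarrow> real) \<Rightarrow> 'n \<Rightarrow> 'n \<Rightarrow> (real^'n) \<times> (real^'n) \<Rightarrow> real" where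
  "finv L \<mu> \<nu> p = matrix_inv (fmat L p) $ \<mu> $ \<nu>"

definition cartan :: "((real^'n) \<times> (real^'n) \<Rightarrow> real) \<Rightarrow> 'n \<Rightarrow> 'n \<Rightarrow> 'n \<Rightarrow> (real^'n) \<times> (real^'n) \<Rightarrow> real" where
  "cartan L \<alpha> \<beta> \<gamma> p = 1/2 * pdy (fmetric L \<beta> \<gamma>) \<alpha> p"

definition cartan_up :: "((real^'n) \<times> (real^'n) \<Rightarrow> real) \<Rightarrow> 'n \<Rightarrow> 'n \<Rightarrow> 'n \<Rightarrow> (real^'n) \<times> (real^'n) \<Rightarrow> real" where
  "cartan_up L \<alpha> \<mu> \<gamma> p = (\<Sum>\<delta>\<in>UNIV. finv L \<alpha> \<delta> p * cartan L \<delta> \<mu> \<gamma> p)"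

definition spray :: "((real^'n) \<times> (real^'n) \<Rightarrow> real) \<Rightarrow> 'n \<Rightarrow> (real^'n) \<times> (real^'n) \<Rightarrow> real" where
  "spray L \<alpha> p = 1/2 * (\<Sum>\<delta>\<in>UNIV. finv L \<alpha> \<delta> p *
      ((\<Sum>\<gamma>\<in>UNIV. pdx (pdy L \<delta>) \<gamma> p * (snd p $ \<gamma>)) - pdx L \<delta> p))"

definition nlconn :: "((real^'n) \<times> (real^'n) \<Rightarrow> real) \<Rightarrow> 'n \<Rightarrow> 'n \<Rightarrow> (real^'n) \<times> (real^'n) \<Rightarrow> real" where
  "nlconn L \<alpha> \<mu> p = pdy (spray L \<alpha>) \<mu> p"

definition hderiv :: "((real^'n) \<times> (real^'n) \<Rightarrow> real) \<Rightarrow> ((real^'n) \<times> (real^'n) \<Rightarrow> real) \<Rightarrow> 'n \<Rightarrow> (real^'n) \<times> (real^'n) \<Rightarrow> real" where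
  "hderiv L f \<mu> p = pdx f \<mu> p - (\<Sum>\<nu>\<in>UNIV. nlconn L \<nu> \<mu> p * pdy f \<nu> p)"

definition chern_rund :: "((real^'n) \<times> (real^'n) \<Rightarrow> real) \<Rightarrow> 'n \<Rightarrow> 'n \<Rightarrow> 'n \<Rightarrow> (real^'n) \<times> (real^'n) \<Rightarrow> real" where
  "chern_rund L \<alpha> \<beta> \<gamma> p = 1/2 * (\<Sum>\<sigma>\<in>UNIV. finv L \<alpha> \<sigma> p *
      (hderiv L (fmetric L \<sigma> \<gamma>) \<beta> p + hderiv L (fmetric L \<sigma> \<beta>) \<gamma> p
       - hderiv L (fmetric L \<beta> \<gamma>) \<sigma> p))"

definition Dsec :: "((real^'n) \<times> (real^'n) \<Rightarrow> real) \<Rightarrow> (real^'n \<Rightarrow> real^'n) \<Rightarrow> 'n \<Rightarrow> 'n \<Rightarrow> real^'n \<Rightarrow> real" where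
  "Dsec L s \<alpha> \<mu> x = pd (\<lambda>z. s z $ \<mu>) \<alpha> x + nlconn L \<mu> \<alpha> (x, s x)"

definition pbmetric :: "((real^'n) \<times> (real^'n) \<Rightarrow> real) \<Rightarrow> (real^'n \<Rightarrow> real^'n) \<Rightarrow> 'n \<Rightarrow> 'n \<Rightarrow> real^'n \<Rightarrow> real" where
  "pbmetric L s \<alpha> \<beta> x = fmetric L \<alpha> \<beta> (x, s x)"

definition levi_civita :: "('n \<Rightarrow> 'n \<Rightarrow> real^'n \<Rightarrow> real) \<Rightarrow> 'n \<Rightarrow> 'n \<Rightarrow> 'n \<Rightarrow> real^'n \<Rightarrow> real" where
  "levi_civita h \<alpha> \<beta> \<gamma> x = 1/2 * (\<Sum>\<sigma>\<in>UNIV. matrix_inv (\<chi> i j. h i j x) $ \<alpha> $ \<sigma> *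
      (pd (h \<sigma> \<gamma>) \<beta> x + pd (h \<sigma> \<beta>) \<gamma> x - pd (h \<beta> \<gamma>) \<sigma> x))"

end

theory Submission
  imports Defs
begin

text \<open>By the chain rule, \<open>\<partial>\<^sub>c (g\<^sub>a\<^sub>b(x, s x)) = \<partial>\<^sub>c g\<^sub>a\<^sub>b + \<partial>g\<^sub>a\<^sub>b/\<partial>y\<^sup>\<mu> \<partial>\<^sub>c s\<^sup>\<mu>\<close>; adding and subtracting
  \<open>N\<^sup>\<mu>\<^sub>c \<partial>g\<^sub>a\<^sub>b/\<partial>y\<^sup>\<mu>\<close> turns this into \<open>\<delta>\<^sub>c g\<^sub>a\<^sub>b + 2 C\<^sub>a\<^sub>\<mu>\<^sub>b D\<^sub>c s\<^sup>\<mu>\<close>. Inserting this into the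
  Christoffel formula for \<open>s\<^sup>*g\<close>, the \<open>\<delta>\<close>-terms reproduce the Chern--Rund coefficients, and the
  total symmetry of the Cartan tensor (Schwarz's theorem applied to \<open>\<partial>L/\<partial>y\<close>) reduces the
  remaining terms to the three in the statement.\<close>

lemma smooth_on_imp_differentiable_on: "smooth_on S f \<Longrightarrow> f differentiable_on S"
  by (erule smooth_on.cases) auto

lemma smooth_on_frechet_derivative:
  "smooth_on S f \<Longrightarrow> smooth_on S (\<lambda>x. frechet_derivative f (at x) v)"
  by (erule smooth_on.cases) auto

lemma smooth_on_imp_differentiable_at:
  "open S \<Longrightarrow> smooth_on S f \<Longrightarrow> x \<in> S \<Longrightarrow> f differentiable (at x)"
  using smooth_on_imp_differentiable_on differentiable_on_eq_differentiable_at by blast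

lemma smooth_on_imp_continuous_at:
  "open S \<Longrightarrow> smooth_on S f \<Longrightarrow> x \<in> S \<Longrightarrow> isCont f x"
  using smooth_on_imp_differentiable_at differentiable_imp_continuous_within by blast

lemma has_real_derivative_along_line:
  fixes G :: "'a::real_normed_vector \<Rightarrow> real"
  assumes "G differentiable (at (q + r *\<^sub>R w))"
  shows "((\<lambda>r. G (q + r *\<^sub>R w)) has_real_derivative frechet_derivative G (at (q + r *\<^sub>R w)) w) (at r)"
proof -
  let ?G' = "frechet_derivative G (at (q + r *\<^sub>R w))"
  have G: "(G has_derivative ?G') (at (q + r *\<^sub>R w))"
    using assms frechet_derivative_works by blast
  have "((\<lambda>r. q + r *\<^sub>R w) has_derivative (\<lambda>h. h *\<^sub>R w)) (at r)"
    by (auto intro!: derivative_eq_intros)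
  from has_derivative_compose[OF this G]
  have "((\<lambda>r. G (q + r *\<^sub>R w)) has_derivative (\<lambda>h. ?G' (h *\<^sub>R w))) (at r)" by simp
  moreover have "(\<lambda>h. ?G' (h *\<^sub>R w)) = (*) (?G' w)"
    using linear_scale[OF has_derivative_linear[OF G]] by (auto simp: mult.commute)
  ultimately show ?thesis by (simp add: has_field_derivative_def)
qed

lemma mvt_along_line:
  fixes G :: "'a::real_normed_vector \<Rightarrow> real"
  assumes "0 < t" "\<And>r. 0 \<le> r \<Longrightarrow> r \<le> t \<Longrightarrow> G differentiable (at (q + r *\<^sub>R w))"
  shows "\<exists>r. 0 < r \<and> r < t \<and> G (q + t *\<^sub>R w) - G q = t * frechet_derivative G (at (q + r *\<^sub>R w)) w"
  using MVT2[of 0 t "\<lambda>r. G (q + r *\<^sub>R w)" "\<lambda>r. frechet_derivative G (at (q + r *\<^sub>R w)) w"]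
    assms has_real_derivative_along_line by force

lemma parallelogram_subset_ball:
  fixes p a b :: "'a::real_normed_vector"
  assumes "t * (norm a + norm b) < \<delta>" "0 \<le> r" "r \<le> t" "0 \<le> r'" "r' \<le> t"
  shows "p + r *\<^sub>R a + r' *\<^sub>R b \<in> ball p \<delta>"
proof -
  have "norm (r *\<^sub>R a + r' *\<^sub>R b) \<le> r * norm a + r' * norm b"
    using norm_triangle_ineq[of "r *\<^sub>R a" "r' *\<^sub>R b"] assms by simp
  also have "\<dots> \<le> t * norm a + t * norm b"
    using assms by (intro add_mono mult_right_mono) auto
  finally show ?thesis
    using assms(1) by (simp add: dist_norm norm_minus_commute distrib_left add.commute)
qed

lemma small_scale_exists:
  fixes a b :: "'a::real_normed_vector"
  assumes "0 < \<delta>"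
  obtains t where "0 < t" "t * (norm a + norm b) < \<delta>"
proof
  have n: "0 < norm a + norm b + 1"
    by (simp add: add_nonneg_pos)
  then show t: "0 < \<delta> / (norm a + norm b + 1)"
    using assms by simp
  have "\<delta> / (norm a + norm b + 1) * (norm a + norm b) < \<delta> / (norm a + norm b + 1) * (norm a + norm b + 1)"
    by (rule mult_strict_left_mono[OF _ t]) simp
  also have "\<dots> = \<delta>"
    using n by simp
  finally show "\<delta> / (norm a + norm b + 1) * (norm a + norm b) < \<delta>" .
qed

text \<open>Two applications of the mean value theorem, first along \<open>a\<close> to the difference of
  \<open>G\<close> on two parallel lines, then along \<open>b\<close> to the directional derivative.\<close>
lemma second_difference_eq_mixed_derivative:
  fixes G :: "'a::real_normed_vector \<Rightarrow> real" and p a b :: 'a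
  defines "Da \<equiv> \<lambda>q. frechet_derivative G (at q) a"
  assumes t: "0 < t" "t * (norm a + norm b) < \<delta>"
    and diff: "\<And>q. q \<in> ball p \<delta> \<Longrightarrow> G differentiable (at q) \<and> Da differentiable (at q)"
  shows "\<exists>q\<in>ball p \<delta>. G (p + t *\<^sub>R a + t *\<^sub>R b) - G (p + t *\<^sub>R a) - G (p + t *\<^sub>R b) + G p
           = t * t * frechet_derivative Da (at q) b"
proof -
  note inball = parallelogram_subset_ball[OF t(2), of _ _ p]
  have "((\<lambda>r. G ((p + t *\<^sub>R b) + r *\<^sub>R a) - G (p + r *\<^sub>R a)) has_real_derivative
          Da (p + t *\<^sub>R b + r *\<^sub>R a) - Da (p + r *\<^sub>R a)) (at r)" if "0 \<le> r" "r \<le> t" for r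
    unfolding Da_def using diff inball[of r t] inball[of r 0] that t(1)
    by (intro DERIV_diff has_real_derivative_along_line) (auto simp: add_ac)
  from MVT2[OF t(1) this] obtain \<xi> where \<xi>: "0 < \<xi>" "\<xi> < t" and mvt_a:
    "G (p + t *\<^sub>R b + t *\<^sub>R a) - G (p + t *\<^sub>R a) - (G (p + t *\<^sub>R b + 0 *\<^sub>R a) - G (p + 0 *\<^sub>R a))
       = (t - 0) * (Da (p + t *\<^sub>R b + \<xi> *\<^sub>R a) - Da (p + \<xi> *\<^sub>R a))"
    by blast
  have "\<exists>\<zeta>. 0 < \<zeta> \<and> \<zeta> < t \<and> Da ((p + \<xi> *\<^sub>R a) + t *\<^sub>R b) - Da (p + \<xi> *\<^sub>R a)
          = t * frechet_derivative Da (at ((p + \<xi> *\<^sub>R a) + \<zeta> *\<^sub>R b)) b"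
    using diff inball \<xi> by (intro mvt_along_line t(1)) auto
  then obtain \<zeta> where \<zeta>: "0 < \<zeta>" "\<zeta> < t" and mvt_b:
    "Da (p + \<xi> *\<^sub>R a + t *\<^sub>R b) - Da (p + \<xi> *\<^sub>R a)
       = t * frechet_derivative Da (at (p + \<xi> *\<^sub>R a + \<zeta> *\<^sub>R b)) b"
    by blast
  show ?thesis
  proof
    show "p + \<xi> *\<^sub>R a + \<zeta> *\<^sub>R b \<in> ball p \<delta>" using inball \<xi> \<zeta> by simp
    show "G (p + t *\<^sub>R a + t *\<^sub>R b) - G (p + t *\<^sub>R a) - G (p + t *\<^sub>R b) + G p
        = t * t * frechet_derivative Da (at (p + \<xi> *\<^sub>R a + \<zeta> *\<^sub>R b)) b"
      using mvt_a mvt_b by (simp add: add_ac)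
  qed
qed

text \<open>Schwarz's theorem: the second differences in the two orders coincide, and each equals
  \<open>t\<^sup>2\<close> times a mixed derivative at a point arbitrarily close to \<open>p\<close>; continuity of the mixed
  derivatives then forces them to agree at \<open>p\<close>.\<close>
lemma smooth_on_frechet_derivative_commute:
  fixes G :: "'a::euclidean_space \<Rightarrow> real"
  assumes S: "open S" and G: "smooth_on S G" and p: "p \<in> S"
  shows "frechet_derivative (\<lambda>q. frechet_derivative G (at q) u) (at p) v
       = frechet_derivative (\<lambda>q. frechet_derivative G (at q) v) (at p) u"
proof -
  define D where "D a b q = frechet_derivative (\<lambda>q. frechet_derivative G (at q) a) (at q) b" for a b q
  have D_cont: "isCont (D a b) p" for a b
    unfolding D_def by (intro smooth_on_imp_continuous_at[OF S _ p] smooth_on_frechet_derivative G)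
  have "\<bar>D u v p - D v u p\<bar> < e" if e: "e > 0" for e
  proof -
    have "(D a b \<longlongrightarrow> D a b p) (nhds p)" for a b
      using D_cont by (simp add: isContD tendsto_nhds_iff)
    then have "\<forall>\<^sub>F q in nhds p. dist (D a b q) (D a b p) < e/2" for a b
      using e by (intro tendstoD) simp_all
    then have "\<forall>\<^sub>F q in nhds p. q \<in> S \<and> dist (D u v q) (D u v p) < e/2 \<and> dist (D v u q) (D v u p) < e/2"
      using eventually_nhds_in_open[OF S p] by (auto intro!: eventually_conj)
    then obtain \<delta> where \<delta>: "\<delta> > 0" and near: "\<And>q. q \<in> ball p \<delta> \<Longrightarrow>
        q \<in> S \<and> dist (D u v q) (D u v p) < e/2 \<and> dist (D v u q) (D v u p) < e/2"
      unfolding eventually_nhds_metric by (auto simp: dist_commute)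
    obtain t where t: "0 < t" "t * (norm u + norm v) < \<delta>" "t * (norm v + norm u) < \<delta>"
      using small_scale_exists[OF \<delta>, of u v] by (metis add.commute)
    have diff: "G differentiable (at q) \<and> (\<lambda>q. frechet_derivative G (at q) a) differentiable (at q)"
      if "q \<in> ball p \<delta>" for q a
      using near[OF that] G
      by (auto intro: smooth_on_imp_differentiable_at[OF S] smooth_on_frechet_derivative)
    obtain q1 where q1: "q1 \<in> ball p \<delta>" and e1:
      "G (p + t *\<^sub>R u + t *\<^sub>R v) - G (p + t *\<^sub>R u) - G (p + t *\<^sub>R v) + G p = t * t * D u v q1"
      using second_difference_eq_mixed_derivative[OF t(1,2) diff] unfolding D_def by blast
    obtain q2 where q2: "q2 \<in> ball p \<delta>" and e2:
      "G (p + t *\<^sub>R v + t *\<^sub>R u) - G (p + t *\<^sub>R v) - G (p + t *\<^sub>R u) + G p = t * t * D v u q2"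
      using second_difference_eq_mixed_derivative[OF t(1,3) diff] unfolding D_def by blast
    have "D u v q1 = D v u q2"
      using e1 e2 t(1) by (simp add: algebra_simps)
    then show ?thesis
      using near[OF q1] near[OF q2] by (simp add: dist_real_def abs_if split: if_splits)
  qed
  from this[of "\<bar>D u v p - D v u p\<bar>"] show ?thesis
    unfolding D_def by fastforce
qed

lemma pd_compose_graph:
  fixes F :: "(real^'n) \<times> (real^'n) \<Rightarrow> real" and s :: "real^'n \<Rightarrow> real^'n"
  assumes F: "F differentiable (at (x, s x))"
    and s: "\<And>\<mu>. (\<lambda>z. s z $ \<mu>) differentiable (at x)"
  shows "pd (\<lambda>z. F (z, s z)) \<beta> x
       = pdx F \<beta> (x, s x) + (\<Sum>\<mu>\<in>UNIV. pdy F \<mu> (x, s x) * pd (\<lambda>z. s z $ \<mu>) \<beta> x)"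
proof -
  define F' where "F' = frechet_derivative F (at (x, s x))"
  define s' where "s' \<mu> = frechet_derivative (\<lambda>z. s z $ \<mu>) (at x)" for \<mu>
  have F': "(F has_derivative F') (at (x, s x))"
    using F frechet_derivative_works F'_def by blast
  have "((\<lambda>z. s z $ \<mu>) has_derivative s' \<mu>) (at x)" for \<mu>
    using s[of \<mu>] frechet_derivative_works unfolding s'_def by blast
  then have "((\<lambda>z. \<Sum>\<mu>\<in>UNIV. (s z $ \<mu>) *\<^sub>R axis \<mu> 1) has_derivative
      (\<lambda>h. \<Sum>\<mu>\<in>UNIV. s' \<mu> h *\<^sub>R axis \<mu> (1::real))) (at x)"
    by (intro has_derivative_sum has_derivative_scaleR_left)
  moreover have "(\<lambda>z. \<Sum>\<mu>\<in>UNIV. (s z $ \<mu>) *\<^sub>R axis \<mu> 1) = s"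
    using basis_expansion[of "s z" for z] by (simp add: scalar_mult_eq_scaleR fun_eq_iff)
  ultimately have "((\<lambda>z. (z, s z)) has_derivative
      (\<lambda>h. (h, \<Sum>\<mu>\<in>UNIV. s' \<mu> h *\<^sub>R axis \<mu> (1::real)))) (at x)"
    by (intro has_derivative_Pair has_derivative_ident) simp
  from has_derivative_compose[OF this F']
  have "pd (\<lambda>z. F (z, s z)) \<beta> x = F' (axis \<beta> 1, \<Sum>\<mu>\<in>UNIV. s' \<mu> (axis \<beta> 1) *\<^sub>R axis \<mu> 1)"
    unfolding pd_def by (simp add: frechet_derivative_at[symmetric])
  also have "\<dots> = F' (axis \<beta> 1, 0) + (\<Sum>\<mu>\<in>UNIV. s' \<mu> (axis \<beta> 1) * F' (0, axis \<mu> 1))"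
  proof -
    have lF': "linear F'"
      using F' has_derivative_linear by blast
    have l0: "linear (\<lambda>y. F' (0, y))"
      using linear_compose[OF _ lF', of "Pair 0"] by (simp add: o_def linear_iff)
    have "F' (0, \<Sum>\<mu>\<in>UNIV. s' \<mu> (axis \<beta> 1) *\<^sub>R axis \<mu> 1)
        = (\<Sum>\<mu>\<in>UNIV. F' (0, s' \<mu> (axis \<beta> 1) *\<^sub>R axis \<mu> 1))"
      using linear_sum[OF l0] by (simp add: o_def)
    also have "\<dots> = (\<Sum>\<mu>\<in>UNIV. s' \<mu> (axis \<beta> 1) * F' (0, axis \<mu> 1))"
      using linear_scale[OF l0] by simp
    finally have "F' (0, \<Sum>\<mu>\<in>UNIV. s' \<mu> (axis \<beta> 1) *\<^sub>R axis \<mu> 1)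
        = (\<Sum>\<mu>\<in>UNIV. s' \<mu> (axis \<beta> 1) * F' (0, axis \<mu> 1))" .
    moreover have "F' (h, y) = F' (h, 0) + F' (0, y)" for h y
      using linear_add[OF lF', of "(h, 0)" "(0, y)"] by simp
    ultimately show ?thesis
      by metis
  qed
  finally show ?thesis
    by (simp add: pdx_def pdy_def pd_def F'_def s'_def mult.commute)
qed

lemma pdy_eq_frechet_derivative: "pdy F i = (\<lambda>p. frechet_derivative F (at p) (0, axis i 1))"
  by (simp add: fun_eq_iff pdy_def)

lemma smooth_on_pdy: "smooth_on S F \<Longrightarrow> smooth_on S (pdy F i)"
  unfolding pdy_eq_frechet_derivative by (rule smooth_on_frechet_derivative)

lemma smooth_on_fmetric: "smooth_on S L \<Longrightarrow> smooth_on S (fmetric L \<mu> \<nu>)"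
  by (simp add: fmetric_def[abs_def] smooth_on_pdy)

lemma cartan_swap:
  fixes L :: "(real^'n) \<times> (real^'n) \<Rightarrow> real"
  assumes "open S" "smooth_on S L" "p \<in> S"
  shows "cartan L a b c p = cartan L b a c p"
  using smooth_on_frechet_derivative_commute[OF assms(1) smooth_on_pdy[OF assms(2)] assms(3),
      where u = "(0, axis b 1)" and v = "(0, axis a 1)"]
  unfolding cartan_def fmetric_def[abs_def] pdy_eq_frechet_derivative by simp

text \<open>The nonlinear connection terms of the horizontal derivative are exactly those added
  to \<open>\<partial> s\<close> in \<open>D s\<close>, so they cancel.\<close>
lemma pd_pbmetric:
  assumes S: "open S" and L: "smooth_on S L" and xs: "(x, s x) \<in> S"
    and s: "\<And>\<mu>. (\<lambda>z. s z $ \<mu>) differentiable (at x)"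
  shows "pd (pbmetric L s a b) c x
       = hderiv L (fmetric L a b) c (x, s x) + 2 * (\<Sum>\<mu>\<in>UNIV. cartan L a \<mu> b (x, s x) * Dsec L s c \<mu> x)"
proof -
  have "fmetric L a b differentiable (at (x, s x))"
    using smooth_on_imp_differentiable_at[OF S smooth_on_fmetric[OF L] xs] .
  from pd_compose_graph[OF this s]
  have "pd (pbmetric L s a b) c x = pdx (fmetric L a b) c (x, s x)
      + (\<Sum>\<mu>\<in>UNIV. pdy (fmetric L a b) \<mu> (x, s x) * pd (\<lambda>z. s z $ \<mu>) c x)"
    by (simp add: pbmetric_def[abs_def])
  also have "\<dots> = hderiv L (fmetric L a b) c (x, s x)
      + (\<Sum>\<mu>\<in>UNIV. pdy (fmetric L a b) \<mu> (x, s x) * Dsec L s c \<mu> x)"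
    by (simp add: hderiv_def Dsec_def distrib_left sum.distrib mult.commute)
  also have "(\<Sum>\<mu>\<in>UNIV. pdy (fmetric L a b) \<mu> (x, s x) * Dsec L s c \<mu> x)
      = 2 * (\<Sum>\<mu>\<in>UNIV. cartan L a \<mu> b (x, s x) * Dsec L s c \<mu> x)"
    using cartan_swap[OF S L xs, of a _ b]
    by (simp add: cartan_def sum_distrib_left mult.assoc)
  finally show ?thesis .
qed

lemma christoffel_combination_perturb:
  fixes gi :: "'n::finite \<Rightarrow> real" and H dh C :: "'n \<Rightarrow> 'n \<Rightarrow> 'n \<Rightarrow> real"
    and D :: "'n \<Rightarrow> 'n \<Rightarrow> real"
  assumes dh: "\<And>a b c. dh a b c = H a b c + 2 * (\<Sum>\<mu>\<in>UNIV. C a \<mu> b * D c \<mu>)"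
    and C_swap: "\<And>a b c. C a b c = C b a c"
  shows "1/2 * (\<Sum>\<sigma>\<in>UNIV. gi \<sigma> * (dh \<sigma> \<gamma> \<beta> + dh \<sigma> \<beta> \<gamma> - dh \<beta> \<gamma> \<sigma>))
       - 1/2 * (\<Sum>\<sigma>\<in>UNIV. gi \<sigma> * (H \<sigma> \<gamma> \<beta> + H \<sigma> \<beta> \<gamma> - H \<beta> \<gamma> \<sigma>))
       = (\<Sum>\<mu>\<in>UNIV. (\<Sum>\<sigma>\<in>UNIV. gi \<sigma> * C \<sigma> \<mu> \<gamma>) * D \<beta> \<mu>
                 + (\<Sum>\<sigma>\<in>UNIV. gi \<sigma> * C \<sigma> \<mu> \<beta>) * D \<gamma> \<mu>
                 - C \<mu> \<beta> \<gamma> * (\<Sum>\<sigma>\<in>UNIV. gi \<sigma> * D \<sigma> \<mu>))"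
proof -
  have "1/2 * (\<Sum>\<sigma>\<in>UNIV. gi \<sigma> * (dh \<sigma> \<gamma> \<beta> + dh \<sigma> \<beta> \<gamma> - dh \<beta> \<gamma> \<sigma>))
       - 1/2 * (\<Sum>\<sigma>\<in>UNIV. gi \<sigma> * (H \<sigma> \<gamma> \<beta> + H \<sigma> \<beta> \<gamma> - H \<beta> \<gamma> \<sigma>))
      = (\<Sum>\<sigma>\<in>UNIV. \<Sum>\<mu>\<in>UNIV. gi \<sigma> * C \<sigma> \<mu> \<gamma> * D \<beta> \<mu> + gi \<sigma> * C \<sigma> \<mu> \<beta> * D \<gamma> \<mu>
                               - C \<mu> \<beta> \<gamma> * (gi \<sigma> * D \<sigma> \<mu>))"
    unfolding dh C_swap[of \<beta>]
    by (simp add: sum_subtractf[symmetric] sum.distrib[symmetric] sum_distrib_left algebra_simps)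
  also have "\<dots> = (\<Sum>\<mu>\<in>UNIV. \<Sum>\<sigma>\<in>UNIV. gi \<sigma> * C \<sigma> \<mu> \<gamma> * D \<beta> \<mu> + gi \<sigma> * C \<sigma> \<mu> \<beta> * D \<gamma> \<mu>
                               - C \<mu> \<beta> \<gamma> * (gi \<sigma> * D \<sigma> \<mu>))"
    by (rule sum.swap)
  finally show ?thesis
    by (simp add: sum.distrib sum_subtractf sum_distrib_left sum_distrib_right)
qed

theorem mainTheorem1:
  fixes U :: "(real^'n) set"
    and L :: "(real^'n) \<times> (real^'n) \<Rightarrow> real"
    and s :: "real^'n \<Rightarrow> real^'n"
  assumes U_open: "open U"
    and L_smooth: "smooth_on (U \<times> - {0}) L"
    and L_hom: "\<forall>x\<in>U. \<forall>y. y \<noteq> 0 \<longrightarrow> (\<forall>t>0. L (x, t *\<^sub>R y) = t\<^sup>2 * L (x, y))"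
    and g_nondeg: "\<forall>x\<in>U. \<forall>y. y \<noteq> 0 \<longrightarrow> invertible (fmat L (x, y))"
    and s_smooth: "\<forall>\<mu>. smooth_on U (\<lambda>x. s x $ \<mu>)"
    and s_nonzero: "\<forall>x\<in>U. s x \<noteq> 0"
    and pb_nondeg: "\<forall>x\<in>U. invertible (\<chi> i j. pbmetric L s i j x)"
    and x_in: "x \<in> U"
  shows "levi_civita (pbmetric L s) \<alpha> \<beta> \<gamma> x - chern_rund L \<alpha> \<beta> \<gamma> (x, s x)
         = (\<Sum>\<mu>\<in>UNIV. cartan_up L \<alpha> \<mu> \<gamma> (x, s x) * Dsec L s \<beta> \<mu> x
                     + cartan_up L \<alpha> \<mu> \<beta> (x, s x) * Dsec L s \<gamma> \<mu> x
                     - cartan L \<mu> \<beta> \<gamma> (x, s x) *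
                         (\<Sum>\<delta>\<in>UNIV. finv L \<alpha> \<delta> (x, s x) * Dsec L s \<delta> \<mu> x))"
proof -
  have S: "open (U \<times> - {0::real^'n})"
    using U_open by (intro open_Times) auto
  have xs: "(x, s x) \<in> U \<times> - {0}"
    using x_in s_nonzero by auto
  have "(\<lambda>z. s z $ \<mu>) differentiable (at x)" for \<mu>
    using smooth_on_imp_differentiable_at[OF U_open _ x_in] s_smooth by blast
  from christoffel_combination_perturb[where gi = "\<lambda>\<sigma>. finv L \<alpha> \<sigma> (x, s x)"
      and dh = "\<lambda>a b c. pd (pbmetric L s a b) c x" and H = "\<lambda>a b c. hderiv L (fmetric L a b) c (x, s x)"
      and C = "\<lambda>a b c. cartan L a b c (x, s x)" and D = "\<lambda>c \<mu>. Dsec L s c \<mu> x",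
      OF pd_pbmetric[OF S L_smooth xs this] cartan_swap[OF S L_smooth xs]]
  moreover have "matrix_inv (\<chi> i j. pbmetric L s i j x) $ \<alpha> $ \<sigma> = finv L \<alpha> \<sigma> (x, s x)" for \<sigma>
    by (simp add: pbmetric_def finv_def fmat_def)
  ultimately show ?thesis
    unfolding levi_civita_def chern_rund_def cartan_up_def by simp
qed

end
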